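(* Let $F$ be a cellular automaton on $A^{\mathbb N}$ with diameter $\delta$ and local rule $f$. For every $u\in A^\delta$, if $\mathfrak d_L(u^\infty,F(u^\infty))=0$, then there exists $k\in\{0,\dots,\delta-1\}$ such that $F(u^\infty)=\sigma^k(u^\infty)$.
   Context: $A$ is a finite alphabet; $u^\infty=uuu\cdots\in A^{\mathbb N}$; $\sigma(x)_i=x_{i+1}$; $x_{[i,j)}=x_i\cdots x_{j-1}$. A cellular automaton with diameter $\delta\ge1$ is $F:A^{\mathbb N}\to A^{\mathbb N}$ with $F(x)_i=f(x_{[i,i+\delta)})$ for a local rule $f:A^\delta\to A$. The Levenshtein distance is $d_L(u,v)=\frac{|u|+|v|}{2}-\ell$, $\ell$ the length of a longest common subsequence; the Feldman pseudo-metric is $\mathfrak d_L(x,y)=\limsup_{l\to\infty}d_L(x_{[0,l)},y_{[0,l)})/l$. *)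

theory Defs
  imports "HOL-Library.Sublist" "HOL-Library.Extended_Real" "HOL-Library.Liminf_Limsup" Complex_Main
begin

definition periodic :: "'a list \<Rightarrow> nat \<Rightarrow> 'a" where
  "periodic u = (\<lambda>i. u ! (i mod length u))"

definition shift :: "(nat \<Rightarrow> 'a) \<Rightarrow> nat \<Rightarrow> 'a" where
  "shift x = (\<lambda>i. x (Suc i))"

definition CA :: "nat \<Rightarrow> ('a list \<Rightarrow> 'a) \<Rightarrow> (nat \<Rightarrow> 'a) \<Rightarrow> nat \<Rightarrow> 'a" where
  "CA d f x = (\<lambda>i. f (map x [i..<i + d]))"

definition factor :: "(nat \<Rightarrow> 'a) \<Rightarrow> nat \<Rightarrow> nat \<Rightarrow> 'a list" where
  "factor x i j = map x [i..<j]"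

definition lcs_len :: "'a list \<Rightarrow> 'a list \<Rightarrow> nat" where
  "lcs_len u v = Max {length w | w. subseq w u \<and> subseq w v}"

definition lev_dist :: "'a list \<Rightarrow> 'a list \<Rightarrow> real" where
  "lev_dist u v = (real (length u) + real (length v)) / 2 - real (lcs_len u v)"

definition feldman :: "(nat \<Rightarrow> 'a) \<Rightarrow> (nat \<Rightarrow> 'a) \<Rightarrow> ereal" where
  "feldman x y = limsup (\<lambda>l. ereal (lev_dist (factor x 0 l) (factor y 0 l) / real l))"

end

theory Submission
  imports Defs
begin

text \<open>
  Both \<open>x = u\<^sup>\<infinity>\<close> and \<open>y = F x\<close> are \<open>\<delta>\<close>-periodic, so if they share a single factor of
  length \<open>\<delta>\<close> then \<open>y = \<sigma>\<^sup>k x\<close> for some \<open>k < \<delta>\<close>. Otherwise, in a common subsequence of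
  the prefixes of length \<open>l\<close>, every run of consecutive aligned matches is shorter than \<open>\<delta>\<close>
  and is broken off by a skipped letter. Charging the runs to the skips bounds the length
  \<open>\<ell>\<close> of a longest common subsequence by \<open>(2\<delta> - 1) \<ell> \<le> (\<delta> - 1)(2l + 1)\<close>, so the
  Levenshtein distance of the prefixes is at least \<open>l / (4\<delta> - 2)\<close> for large \<open>l\<close> and the
  Feldman distance is positive.
\<close>

lemma length_factor [simp]: "length (factor x i j) = j - i"
  by (simp add: factor_def)

lemma nth_factor [simp]: "t < j - i \<Longrightarrow> factor x i j ! t = x (i + t)"
  by (simp add: factor_def)

lemma factor_empty [simp]: "factor x i i = []"
  by (simp add: factor_def)

lemma factor_Cons: "i < j \<Longrightarrow> factor x i j = x i # factor x (Suc i) j"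
  by (simp add: factor_def upt_conv_Cons)

lemma factor_snoc: "i \<le> j \<Longrightarrow> factor x i (Suc j) = factor x i j @ [x j]"
  by (simp add: factor_def)

lemma lcs_len_attained:
  obtains w where "subseq w u" "subseq w v" "length w = lcs_len u v"
proof -
  let ?S = "{length w | w. subseq w u \<and> subseq w v}"
  have "?S \<subseteq> {..length u}"
    by (auto dest: list_emb_length)
  then have "finite ?S"
    by (rule finite_subset) simp
  moreover have "?S \<noteq> {}"
    by auto
  ultimately have "lcs_len u v \<in> ?S"
    unfolding lcs_len_def by (rule Max_in)
  then obtain w where "subseq w u" "subseq w v" "length w = lcs_len u v"
    by auto
  then show ?thesis
    by (rule that)
qed

lemma subseq_Cons_both_cases:
  assumes "subseq (c # v) (p # xs)" and "subseq (c # v) (q # ys)"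
  obtains (skip_left) "subseq (c # v) xs"
    | (skip_right) "subseq (c # v) ys"
    | (match) "c = p" "c = q" "subseq v xs" "subseq v ys"
  using assms by (auto split: if_splits)

text \<open>
  The parameter \<open>r\<close> is the length of the run of aligned matches that ends just before
  the positions \<open>a\<close> and \<open>b\<close>; it is paid for by the slack \<open>D\<close> of the right-hand side
  whenever a letter is skipped, and it cannot reach \<open>D + 1\<close>.
\<close>

lemma common_subseq_run_bound:
  fixes x y :: "nat \<Rightarrow> 'a"
  assumes no_block: "\<And>a b. factor x a (a + Suc D) \<noteq> factor y b (b + Suc D)"
  shows "\<lbrakk>subseq w (factor x a (a + n)); subseq w (factor y b (b + n')); r \<le> D; r \<le> a; r \<le> b;
          factor x (a - r) a = factor y (b - r) b\<rbrakk>
         \<Longrightarrow> (2 * D + 1) * length w + r \<le> D * (1 + n + n')"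
proof (induction "n + n'" arbitrary: n n' a b r w rule: less_induct)
  case less
  show ?case
  proof (cases w)
    case Nil
    then show ?thesis
      using less.prems(3) by simp
  next
    case (Cons c v)
    obtain m m' where n: "n = Suc m" and n': "n' = Suc m'"
      using less.prems(1,2) Cons by (cases n; cases n') auto
    have "subseq (c # v) (x a # factor x (Suc a) (Suc a + m))"
      and "subseq (c # v) (y b # factor y (Suc b) (Suc b + m'))"
      using less.prems(1,2) Cons n n' by (simp_all add: factor_Cons)
    then show ?thesis
    proof (cases rule: subseq_Cons_both_cases)
      case skip_left
      have "(2 * D + 1) * length w \<le> D * (1 + m + n')"
        using less.hyps[of m n' w "Suc a" b 0] skip_left less.prems Cons n by simp
      then show ?thesis
        using n less.prems(3) by simp
    next
      case skip_right
      have "(2 * D + 1) * length w \<le> D * (1 + n + m')"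
        using less.hyps[of n m' w a "Suc b" 0] skip_right less.prems Cons n' by simp
      then show ?thesis
        using n' less.prems(3) by simp
    next
      case match
      have run: "factor x (a - r) (Suc a) = factor y (b - r) (Suc b)"
        using less.prems(4-6) match by (simp add: factor_snoc)
      then have "r \<noteq> D"
        using no_block[of "a - r" "b - r"] less.prems(4,5) by auto
      then have "(2 * D + 1) * length v + Suc r \<le> D * (1 + m + m')"
        using less.hyps[of m m' v "Suc a" "Suc b" "Suc r"] match run less.prems(3-5) n n' by simp
      then show ?thesis
        using n n' Cons by simp
    qed
  qed
qed

lemma lcs_len_factor_bound:
  fixes x y :: "nat \<Rightarrow> 'a"
  assumes "\<And>a b. factor x a (a + Suc D) \<noteq> factor y b (b + Suc D)"
  shows "(2 * D + 1) * lcs_len (factor x 0 l) (factor y 0 l) \<le> D * (1 + 2 * l)"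
proof -
  obtain w where "subseq w (factor x 0 (0 + l))" "subseq w (factor y 0 (0 + l))"
    and "length w = lcs_len (factor x 0 l) (factor y 0 l)"
    by (rule lcs_len_attained) simp
  with common_subseq_run_bound[OF assms, of w 0 l 0 l 0] show ?thesis
    by (simp add: mult_2)
qed

lemma lev_dist_same_length:
  "length u = length v \<Longrightarrow> lev_dist u v = real (length u) - real (lcs_len u v)"
  by (simp add: lev_dist_def)

lemma feldman_lower_bound_if_no_common_factor:
  fixes x y :: "nat \<Rightarrow> 'a"
  assumes no_block: "\<And>a b. factor x a (a + Suc D) \<noteq> factor y b (b + Suc D)"
  shows "ereal (1 / (4 * real D + 2)) \<le> feldman x y"
proof -
  have "ereal (1 / (4 * real D + 2)) \<le> ereal (lev_dist (factor x 0 l) (factor y 0 l) / real l)"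
    if l: "2 * D + 1 \<le> l" for l
  proof -
    define L where "L = lcs_len (factor x 0 l) (factor y 0 l)"
    have "(2 * D + 1) * L \<le> D * (1 + 2 * l)"
      unfolding L_def using lcs_len_factor_bound[OF no_block] .
    then have "2 * L + 4 * D * L \<le> l + 4 * D * l"
      using l by (simp add: algebra_simps)
    then have "real l \<le> (4 * real D + 2) * (real l - real L)"
      unfolding of_nat_le_iff[symmetric, where 'a=real] by (simp add: algebra_simps)
    then have "1 / (4 * real D + 2) \<le> (real l - real L) / real l"
      using l by (simp add: field_simps)
    then show ?thesis
      by (simp add: lev_dist_same_length L_def)
  qed
  then have "\<forall>\<^sub>F l in sequentially.
      ereal (1 / (4 * real D + 2)) \<le> ereal (lev_dist (factor x 0 l) (factor y 0 l) / real l)"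
    unfolding eventually_sequentially by blast
  then show ?thesis
    unfolding feldman_def by (rule le_Limsup[rotated]) simp
qed

lemma eq_if_mod_eq_period:
  fixes x :: "nat \<Rightarrow> 'a"
  assumes period: "\<And>i. x (i + p) = x i" and "i mod p = j mod p"
  shows "x i = x j"
proof -
  have multiple: "x (k + p * n) = x k" for k n
    by (induction n) (simp_all, metis period add.assoc add.commute)
  have "x k = x (k mod p)" for k
    using multiple[of "k mod p" "k div p"] by (simp only: mod_mult_div_eq)
  then show ?thesis
    using assms(2) by metis
qed

lemma periodic_add_length: "periodic u (i + length u) = periodic u i"
  by (simp add: periodic_def)

lemma CA_add_period:
  fixes x :: "nat \<Rightarrow> 'a"
  assumes "\<And>i. x (i + p) = x i"
  shows "CA d f x (i + p) = CA d f x i"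
proof -
  have "map x [i + p..<i + p + d] = map x [i..<i + d]"
    by (rule nth_equalityI) (simp_all, metis assms add.assoc add.commute)
  then show ?thesis
    by (simp add: CA_def)
qed

lemma funpow_shift: "(shift ^^ k) x = (\<lambda>i. x (i + k))"
  by (induction k) (auto simp: shift_def)

lemma funpow_shift_if_common_factor:
  fixes x y :: "nat \<Rightarrow> 'a"
  assumes x: "\<And>i. x (i + p) = x i" and y: "\<And>i. y (i + p) = y i" and "0 < p"
    and block: "factor x a (a + p) = factor y b (b + p)"
  shows "\<exists>k<p. y = (shift ^^ k) x"
proof -
  obtain D where p: "p = Suc D"
    using \<open>0 < p\<close> by (cases p) auto
  \<comment> \<open>\<open>k \<equiv> a - b (mod p)\<close>, written without subtraction\<close>
  define k where "k = (a + D * b) mod p"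
  have "y j = x (j + k)" for j
  proof -
    define t where "t = (j + D * b) mod p"
    have "t < p"
      using p by (simp add: t_def)
    have "(b + t) mod p = (j + p * b) mod p"
      by (simp add: t_def p mod_simps algebra_simps)
    then have "y j = y (b + t)"
      by (intro eq_if_mod_eq_period[where x = y, OF y]) simp
    also have "\<dots> = x (a + t)"
      using arg_cong[OF block, of "\<lambda>w. w ! t"] \<open>t < p\<close> by simp
    also have "\<dots> = x (j + k)"
      by (rule eq_if_mod_eq_period[where x = x, OF x]) (simp add: t_def k_def mod_simps algebra_simps)
    finally show ?thesis .
  qed
  moreover have "k < p"
    using p by (simp add: k_def)
  ultimately show ?thesis
    by (auto simp: funpow_shift)
qed

theorem lemmal:
  fixes f :: "('a::finite) list \<Rightarrow> 'a" and \<delta> :: nat and u :: "'a list"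
  assumes "\<delta> \<ge> 1"
    and "length u = \<delta>"
    and "feldman (periodic u) (CA \<delta> f (periodic u)) = 0"
  shows "\<exists>k \<in> {0..<\<delta>}. CA \<delta> f (periodic u) = (shift ^^ k) (periodic u)"
proof (rule ccontr)
  assume no_shift: "\<not> ?thesis"
  obtain D where \<delta>: "\<delta> = Suc D"
    using assms(1) by (cases \<delta>) auto
  let ?x = "periodic u" and ?y = "CA \<delta> f (periodic u)"
  have x_period: "?x (i + \<delta>) = ?x i" for i
    using assms(2) periodic_add_length by metis
  have y_period: "?y (i + \<delta>) = ?y i" for i
    using CA_add_period x_period by metis
  have "factor ?x a (a + Suc D) \<noteq> factor ?y b (b + Suc D)" for a b
    using funpow_shift_if_common_factor[of ?x \<delta> ?y] x_period y_period no_shift \<delta> by fastforce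
  then have "ereal (1 / (4 * real D + 2)) \<le> feldman ?x ?y"
    by (rule feldman_lower_bound_if_no_common_factor)
  with assms(3) show False
    by simp
qed

end
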